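(* Let $A\in\mathbb{R}^{m\times n}$ and let $N\subseteq[n]$ be such that the submatrix $A_{[n]\setminus N}$ has full column rank. Then for every $z\in\ker(A)$, $\|z\|_\infty\le\kappa_A\|z_N\|_1$.
   Context: $A_S$ denotes the submatrix of $A$ formed by the columns in $S$, and $z_N$ the restriction of $z$ to coordinates in $N$. An elementary vector of $\ker(A)$ is a nonzero $g\in\ker(A)$ with inclusion-minimal support among nonzero vectors of $\ker(A)$. The circuit imbalance is $\kappa_A=\max\{|g_i|/|g_j|: g \text{ elementary},\ i,j\in\mathrm{supp}(g)\}$. *)

theory Defs
  imports "HOL-Analysis.Analysis"
begin

definition supp_vec :: "real^'n \<Rightarrow> 'n set" where
  "supp_vec g = {i. g $ i \<noteq> 0}"

definition elementary_vec :: "real^'n^'m \<Rightarrow> real^'n \<Rightarrow> bool" where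
  "elementary_vec A g \<longleftrightarrow> g \<noteq> 0 \<and> A *v g = 0 \<and>
     (\<forall>h. h \<noteq> 0 \<and> A *v h = 0 \<and> supp_vec h \<subseteq> supp_vec g \<longrightarrow> supp_vec h = supp_vec g)"

definition circuit_imbalance :: "real^'n^'m \<Rightarrow> real" where
  "circuit_imbalance A =
     (let R = {\<bar>g $ i\<bar> / \<bar>g $ j\<bar> | g i j. elementary_vec A g \<and> i \<in> supp_vec g \<and> j \<in> supp_vec g}
      in if R = {} then 0 else Sup R)"

definition full_col_rank_on :: "real^'n^'m \<Rightarrow> 'n set \<Rightarrow> bool" where
  "full_col_rank_on A S \<longleftrightarrow>
     (\<forall>c :: 'n \<Rightarrow> real. (\<Sum>j\<in>S. c j *\<^sub>R column j A) = 0 \<longrightarrow> (\<forall>j\<in>S. c j = 0))"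

end

theory Submission
  imports Defs
begin

text \<open>A nonzero kernel vector \<open>z\<close> contains a conformal elementary vector \<open>g\<close> (same signs,
  support inside that of \<open>z\<close>). Subtracting the largest multiple \<open>t g\<close> that keeps the signs
  of \<open>z\<close> leaves a kernel vector \<open>z'\<close> of smaller support with \<open>|z| = |z'| + t |g|\<close>
  coordinatewise, so by induction on the support it suffices to bound \<open>g\<close>. As the columns
  outside \<open>N\<close> are independent, \<open>g\<close> is nonzero at some \<open>j \<in> N\<close>, whence
  \<open>|g\<^sub>i| \<le> \<kappa>\<^sub>A |g\<^sub>j| \<le> \<kappa>\<^sub>A \<parallel>g\<^sub>N\<parallel>\<^sub>1\<close>.\<close>

definition conformal :: "real^'n \<Rightarrow> real^'n \<Rightarrow> bool" where
  "conformal g z \<longleftrightarrow> (\<forall>j. g $ j \<noteq> 0 \<longrightarrow> 0 < g $ j * z $ j)"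

lemma conformal_refl: "conformal z z"
  by (simp add: conformal_def zero_less_mult_iff linorder_neq_iff)

lemma conformal_supp_subset: "conformal g z \<Longrightarrow> supp_vec g \<subseteq> supp_vec z"
  by (auto simp: conformal_def supp_vec_def)

lemma conformal_trans:
  assumes "conformal x y" "conformal y z"
  shows "conformal x z"
  unfolding conformal_def
proof (intro allI impI)
  fix j assume "x $ j \<noteq> 0"
  with assms(1) have "0 < x $ j * y $ j"
    by (simp add: conformal_def)
  then have "y $ j \<noteq> 0"
    by auto
  with assms(2) have "0 < y $ j * z $ j"
    by (simp add: conformal_def)
  with \<open>0 < x $ j * y $ j\<close> show "0 < x $ j * z $ j"
    by (auto simp: zero_less_mult_iff)
qed

lemma conformal_scaleR: "0 < t \<Longrightarrow> conformal g z \<Longrightarrow> conformal (t *\<^sub>R g) z"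
  by (auto simp: conformal_def mult.assoc)

lemma abs_add_conformal:
  assumes "conformal x z" "conformal y z"
  shows "\<bar>x $ j + y $ j\<bar> = \<bar>x $ j\<bar> + \<bar>y $ j\<bar>"
proof (cases "x $ j = 0 \<or> y $ j = 0")
  case False
  with assms have "0 < x $ j * z $ j" "0 < y $ j * z $ j"
    by (auto simp: conformal_def)
  then have "0 < x $ j * y $ j"
    by (auto simp: zero_less_mult_iff)
  then show ?thesis
    by (auto simp: zero_less_mult_iff)
qed auto

text \<open>Coordinates where \<open>g\<close> and \<open>z\<close> have opposite signs only grow, so \<open>t\<close> is limited by the
  same-sign coordinates alone.\<close>

lemma conformal_reduction:
  assumes supp: "supp_vec g \<subseteq> supp_vec z" and agree: "\<exists>j. 0 < g $ j * z $ j"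
  obtains t where "0 < t" "conformal (z - t *\<^sub>R g) z"
    "supp_vec (z - t *\<^sub>R g) \<subset> supp_vec z"
proof -
  define J where "J = {j. 0 < g $ j * z $ j}"
  define t where "t = Min ((\<lambda>j. z $ j / g $ j) ` J)"
  have "J \<noteq> {}" using agree by (auto simp: J_def)
  then have "t \<in> (\<lambda>j. z $ j / g $ j) ` J"
    unfolding t_def by (intro Min_in) auto
  then obtain j0 where j0: "j0 \<in> J" "t = z $ j0 / g $ j0"
    by blast
  have t_le: "t \<le> z $ j / g $ j" if "j \<in> J" for j
    using that by (simp add: t_def)
  have "0 < t"
    using j0 by (auto simp: J_def zero_less_divide_iff zero_less_mult_iff)
  let ?z' = "z - t *\<^sub>R g"
  have expand: "?z' $ j * z $ j = z $ j * z $ j - t * (g $ j * z $ j)" for j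
    by (simp add: algebra_simps)
  have nonneg: "0 \<le> ?z' $ j * z $ j" for j
  proof (cases "j \<in> J")
    case True
    then have "g $ j \<noteq> 0" "0 < g $ j * z $ j"
      by (auto simp: J_def)
    have "t * (g $ j * z $ j) \<le> z $ j / g $ j * (g $ j * z $ j)"
      using t_le[OF True] \<open>0 < g $ j * z $ j\<close> by (intro mult_right_mono) simp_all
    also have "\<dots> = z $ j * z $ j"
      using \<open>g $ j \<noteq> 0\<close> by simp
    finally show ?thesis
      using expand[of j] by linarith
  next
    case False
    then have "t * (g $ j * z $ j) \<le> 0"
      using \<open>0 < t\<close> by (simp add: J_def mult_nonneg_nonpos)
    moreover have "0 \<le> z $ j * z $ j"
      by simp
    ultimately show ?thesis
      using expand[of j] by linarith
  qed
  have supp': "supp_vec ?z' \<subseteq> supp_vec z"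
    using supp by (auto simp: supp_vec_def)
  have "conformal ?z' z"
    unfolding conformal_def
  proof (intro allI impI)
    fix j assume "?z' $ j \<noteq> 0"
    with supp' have "z $ j \<noteq> 0" by (auto simp: supp_vec_def)
    with \<open>?z' $ j \<noteq> 0\<close> nonneg[of j] show "0 < ?z' $ j * z $ j"
      by (simp add: order_less_le)
  qed
  moreover have "j0 \<in> supp_vec z - supp_vec ?z'"
    using j0 by (auto simp: J_def supp_vec_def)
  ultimately show ?thesis
    using that \<open>0 < t\<close> supp' by blast
qed

lemma full_col_rank_on_kernel_eq_0:
  fixes A :: "real^'n^'m"
  assumes rank: "full_col_rank_on A S" and "A *v h = 0" and outside: "\<forall>j. j \<notin> S \<longrightarrow> h $ j = 0"
  shows "h = 0"
proof -
  have "0 = (\<Sum>j\<in>UNIV. h $ j *\<^sub>R column j A)"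
    using \<open>A *v h = 0\<close> by (simp add: matrix_mult_sum scalar_mult_eq_scaleR)
  also have "\<dots> = (\<Sum>j\<in>S. h $ j *\<^sub>R column j A)"
    using outside by (intro sum.mono_neutral_right) auto
  finally have "\<forall>j\<in>S. h $ j = 0"
    using rank unfolding full_col_rank_on_def by metis
  then have "h $ j = 0" for j
    using outside by (cases "j \<in> S") simp_all
  then show "h = 0"
    by (simp add: vec_eq_iff)
qed

lemma elementary_vec_same_supp_scaleR:
  fixes A :: "real^'n^'m"
  assumes g: "elementary_vec A g" and g': "elementary_vec A g'" and same: "supp_vec g = supp_vec g'"
  shows "\<exists>c. g = c *\<^sub>R g'"
proof -
  obtain k where k: "g $ k \<noteq> 0"
    using g by (auto simp: elementary_vec_def vec_eq_iff)
  with same have "g' $ k \<noteq> 0"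
    by (auto simp: supp_vec_def)
  define h where "h = g - (g $ k / g' $ k) *\<^sub>R g'"
  have "A *v h = 0"
    using g g' by (simp add: h_def elementary_vec_def algebra_simps)
  moreover have "supp_vec h \<subseteq> supp_vec g"
  proof -
    have "h $ i = 0" if "g $ i = 0" for i
    proof -
      have "g' $ i = 0"
        using that same unfolding supp_vec_def by blast
      with that show ?thesis
        by (simp add: h_def)
    qed
    then show ?thesis
      unfolding supp_vec_def by blast
  qed
  moreover have "k \<in> supp_vec g - supp_vec h"
    using k \<open>g' $ k \<noteq> 0\<close> by (simp add: h_def supp_vec_def)
  ultimately have "h = 0"
    using g unfolding elementary_vec_def by (metis Diff_iff)
  then have "g = (g $ k / g' $ k) *\<^sub>R g'"
    by (simp add: h_def)
  then show ?thesis ..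
qed

definition circuit_ratios :: "real^'n^'m \<Rightarrow> real set" where
  "circuit_ratios A =
     {\<bar>g $ i\<bar> / \<bar>g $ j\<bar> | g i j. elementary_vec A g \<and> i \<in> supp_vec g \<and> j \<in> supp_vec g}"

lemma circuit_imbalance_eq:
  "circuit_imbalance A = (if circuit_ratios A = {} then 0 else Sup (circuit_ratios A))"
  unfolding circuit_imbalance_def circuit_ratios_def Let_def ..

text \<open>Elementary vectors with a common support are proportional, so each ratio is realised
  by one fixed representative per support, of which there are finitely many.\<close>

lemma finite_circuit_ratios: "finite (circuit_ratios A)"
proof -
  define rep where "rep S = (SOME g. elementary_vec A g \<and> supp_vec g = S)" for S
  let ?ratio = "\<lambda>(S, i, j). \<bar>rep S $ i\<bar> / \<bar>rep S $ j\<bar>"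
  have "circuit_ratios A \<subseteq> range ?ratio"
  proof
    fix x assume "x \<in> circuit_ratios A"
    then obtain g i j where x: "x = \<bar>g $ i\<bar> / \<bar>g $ j\<bar>" and g: "elementary_vec A g"
      by (auto simp: circuit_ratios_def)
    let ?r = "rep (supp_vec g)"
    have "elementary_vec A ?r \<and> supp_vec ?r = supp_vec g"
      unfolding rep_def by (rule someI[of _ g]) (use g in auto)
    then obtain c where c: "g = c *\<^sub>R ?r"
      using elementary_vec_same_supp_scaleR[OF g] by metis
    with g have "c \<noteq> 0"
      by (auto simp: elementary_vec_def)
    have "x = \<bar>?r $ i\<bar> / \<bar>?r $ j\<bar>"
      using \<open>c \<noteq> 0\<close> by (subst x, subst (1 2) c) (simp add: abs_mult)
    then show "x \<in> range ?ratio"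
      by (intro image_eqI[where x = "(supp_vec g, i, j)"]) simp_all
  qed
  then show ?thesis
    by (rule finite_subset) simp
qed

lemma circuit_imbalance_nonneg: "0 \<le> circuit_imbalance A"
proof (cases "circuit_ratios A = {}")
  case False
  then obtain x where "x \<in> circuit_ratios A" by blast
  moreover have "0 \<le> x" using calculation by (auto simp: circuit_ratios_def)
  moreover have "x \<le> Sup (circuit_ratios A)"
    using calculation(1) by (intro cSup_upper bdd_above_finite finite_circuit_ratios)
  ultimately have "0 \<le> Sup (circuit_ratios A)"
    by linarith
  with False show ?thesis
    by (simp add: circuit_imbalance_eq)
qed (simp add: circuit_imbalance_eq)

lemma elementary_vec_abs_le_circuit_imbalance:
  fixes A :: "real^'n^'m"
  assumes g: "elementary_vec A g" and "g $ j \<noteq> 0"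
  shows "\<bar>g $ i\<bar> \<le> circuit_imbalance A * \<bar>g $ j\<bar>"
proof (cases "g $ i = 0")
  case True
  then show ?thesis
    using circuit_imbalance_nonneg[of A] by simp
next
  case False
  then have ratio: "\<bar>g $ i\<bar> / \<bar>g $ j\<bar> \<in> circuit_ratios A"
    using g \<open>g $ j \<noteq> 0\<close> unfolding circuit_ratios_def supp_vec_def by blast
  then have "\<bar>g $ i\<bar> / \<bar>g $ j\<bar> \<le> Sup (circuit_ratios A)"
    by (intro cSup_upper bdd_above_finite finite_circuit_ratios)
  with ratio have "\<bar>g $ i\<bar> / \<bar>g $ j\<bar> \<le> circuit_imbalance A"
    by (auto simp: circuit_imbalance_eq)
  with \<open>g $ j \<noteq> 0\<close> show ?thesis
    by (simp add: divide_le_eq mult.commute)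
qed

lemma elementary_vec_abs_le_circuit_imbalance_sum:
  fixes A :: "real^'n^'m"
  assumes rank: "full_col_rank_on A (UNIV - N)" and g: "elementary_vec A g"
  shows "\<bar>g $ i\<bar> \<le> circuit_imbalance A * (\<Sum>j\<in>N. \<bar>g $ j\<bar>)"
proof -
  have "g \<noteq> 0" "A *v g = 0"
    using g by (auto simp: elementary_vec_def)
  then obtain j where "j \<in> N" "g $ j \<noteq> 0"
    using full_col_rank_on_kernel_eq_0[OF rank] by blast
  have "\<bar>g $ i\<bar> \<le> circuit_imbalance A * \<bar>g $ j\<bar>"
    by (rule elementary_vec_abs_le_circuit_imbalance[OF g \<open>g $ j \<noteq> 0\<close>])
  also have "\<dots> \<le> circuit_imbalance A * (\<Sum>j\<in>N. \<bar>g $ j\<bar>)"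
    using \<open>j \<in> N\<close> by (intro mult_left_mono member_le_sum circuit_imbalance_nonneg) auto
  finally show ?thesis .
qed

text \<open>Take \<open>h\<close> of minimal support among the nonzero kernel vectors conforming to \<open>z\<close>. A nonzero
  kernel vector \<open>h'\<close> of strictly smaller support, signed to agree with \<open>h\<close> somewhere, would
  by \<open>conformal_reduction\<close> yield a conforming kernel vector of smaller support still.\<close>

lemma exists_conformal_elementary_vec:
  fixes A :: "real^'n^'m"
  assumes "A *v z = 0" "z \<noteq> 0"
  obtains g where "elementary_vec A g" "conformal g z"
proof -
  define P where "P h \<longleftrightarrow> h \<noteq> 0 \<and> A *v h = 0 \<and> conformal h z" for h
  have "P z"
    using assms by (simp add: P_def conformal_refl)
  then obtain h where "P h" and minimal: "\<And>h'. P h' \<Longrightarrow> card (supp_vec h) \<le> card (supp_vec h')"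
    using ex_has_least_nat[of P z "\<lambda>h. card (supp_vec h)"] by blast
  then have h: "h \<noteq> 0" "A *v h = 0" "conformal h z"
    by (auto simp: P_def)
  have "elementary_vec A h"
    unfolding elementary_vec_def
  proof (intro conjI h(1,2) allI impI)
    fix h' :: "real^'n"
    assume h': "h' \<noteq> 0 \<and> A *v h' = 0 \<and> supp_vec h' \<subseteq> supp_vec h"
    show "supp_vec h' = supp_vec h"
    proof (rule ccontr)
      assume "supp_vec h' \<noteq> supp_vec h"
      with h' obtain k where k: "h $ k \<noteq> 0" "h' $ k = 0"
        by (auto simp: supp_vec_def)
      obtain j where "h' $ j \<noteq> 0"
        using h' by (auto simp: vec_eq_iff)
      with h' have "h' $ j * h $ j \<noteq> 0"
        by (auto simp: supp_vec_def)
      define c where "c = h' $ j * h $ j"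
      define h2 where "h2 = sgn c *\<^sub>R h'"
      have "h2 $ j * h $ j = c * sgn c"
        by (simp add: h2_def c_def)
      also have "\<dots> = \<bar>c\<bar>"
        by (rule abs_sgn[symmetric])
      finally have "0 < h2 $ j * h $ j"
        using \<open>h' $ j * h $ j \<noteq> 0\<close> by (simp add: c_def)
      moreover have "supp_vec h2 \<subseteq> supp_vec h" "A *v h2 = 0" "h2 $ k = 0"
        using h' k \<open>h' $ j * h $ j \<noteq> 0\<close> by (auto simp: h2_def c_def supp_vec_def algebra_simps)
      ultimately obtain t where h3: "conformal (h - t *\<^sub>R h2) h"
        "supp_vec (h - t *\<^sub>R h2) \<subset> supp_vec h"
        using conformal_reduction[of h2 h] by blast
      have "(h - t *\<^sub>R h2) $ k \<noteq> 0"
        using k \<open>h2 $ k = 0\<close> by simp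
      then have "P (h - t *\<^sub>R h2)"
        using conformal_trans[OF h3(1) h(3)] h(2) \<open>A *v h2 = 0\<close>
        unfolding P_def by (auto simp: algebra_simps)
      then have "card (supp_vec h) \<le> card (supp_vec (h - t *\<^sub>R h2))"
        by (rule minimal)
      moreover have "card (supp_vec (h - t *\<^sub>R h2)) < card (supp_vec h)"
        by (rule psubset_card_mono[OF _ h3(2)]) simp
      ultimately show False
        by simp
    qed
  qed
  with h that show ?thesis
    by blast
qed

lemma kernel_abs_le_circuit_imbalance_sum:
  fixes A :: "real^'n^'m"
  assumes rank: "full_col_rank_on A (UNIV - N)"
  shows "A *v z = 0 \<Longrightarrow> \<bar>z $ i\<bar> \<le> circuit_imbalance A * (\<Sum>j\<in>N. \<bar>z $ j\<bar>)"
proof (induction "card (supp_vec z)" arbitrary: z rule: less_induct)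
  case less
  let ?\<kappa> = "circuit_imbalance A"
  show ?case
  proof (cases "z = 0")
    case False
    with less.prems obtain g where g: "elementary_vec A g" "conformal g z"
      by (rule exists_conformal_elementary_vec)
    then obtain j where "g $ j \<noteq> 0"
      by (auto simp: elementary_vec_def vec_eq_iff)
    with g(2) have "\<exists>j. 0 < g $ j * z $ j"
      by (auto simp: conformal_def)
    with conformal_supp_subset[OF g(2)] obtain t where "0 < t"
      and z': "conformal (z - t *\<^sub>R g) z" "supp_vec (z - t *\<^sub>R g) \<subset> supp_vec z"
      by (rule conformal_reduction)
    let ?z' = "z - t *\<^sub>R g"
    have abs_split: "\<bar>z $ j\<bar> = \<bar>?z' $ j\<bar> + t * \<bar>g $ j\<bar>" for j
      using abs_add_conformal[OF z'(1) conformal_scaleR[OF \<open>0 < t\<close> g(2)], of j] \<open>0 < t\<close>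
      by (simp add: abs_mult)
    have "A *v ?z' = 0"
      using less.prems g(1) by (simp add: elementary_vec_def algebra_simps)
    moreover have "card (supp_vec ?z') < card (supp_vec z)"
      by (rule psubset_card_mono[OF _ z'(2)]) simp
    ultimately have IH: "\<bar>?z' $ i\<bar> \<le> ?\<kappa> * (\<Sum>j\<in>N. \<bar>?z' $ j\<bar>)"
      using less.hyps by blast
    have "t * \<bar>g $ i\<bar> \<le> t * (?\<kappa> * (\<Sum>j\<in>N. \<bar>g $ j\<bar>))"
      using elementary_vec_abs_le_circuit_imbalance_sum[OF rank g(1)] \<open>0 < t\<close> by simp
    with IH have "\<bar>z $ i\<bar> \<le> ?\<kappa> * ((\<Sum>j\<in>N. \<bar>?z' $ j\<bar>) + t * (\<Sum>j\<in>N. \<bar>g $ j\<bar>))"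
      unfolding abs_split[of i] by (simp add: algebra_simps)
    also have "\<dots> = ?\<kappa> * (\<Sum>j\<in>N. \<bar>z $ j\<bar>)"
      by (simp add: abs_split sum.distrib sum_distrib_left)
    finally show ?thesis .
  qed simp
qed

theorem lemma2p6:
  fixes A :: "real^'n^'m" and N :: "'n set" and z :: "real^'n"
  assumes "full_col_rank_on A (UNIV - N)"
    and "A *v z = 0"
  shows "(MAX i. \<bar>z $ i\<bar>) \<le> circuit_imbalance A * (\<Sum>i\<in>N. \<bar>z $ i\<bar>)"
  using kernel_abs_le_circuit_imbalance_sum[OF assms] by (simp add: Max_le_iff)

end
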